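(* Let $k\ge 2$, and let $p,q,\rho$ be real parameters with $p+(k-1)q=1$ such that all quantities below are nonnegative. Consider $k$-JRR: $n$ contributors with values in $[k]=\{1,\dots,k\}$ are partitioned into disjoint groups of two, and a group whose true values are $(v_1,v_2)$ reports $(v_1',v_2')\in[k]^2$ with probability $p^2+\rho pq$ if $v_1'=v_1,v_2'=v_2$; $pq-\frac{1}{k-1}\rho pq$ if $v_1'=v_1,v_2'\ne v_2$; $pq-\frac{1}{k-1}\rho pq$ if $v_1'\ne v_1,v_2'=v_2$; and $q^2+\frac{1}{(k-1)^2}\rho pq$ if $v_1'\ne v_1,v_2'\ne v_2$. Then each contributor reports its true value with probability $p$ and each specific other value with probability $q$. Consequently, if $n_v$ is the number of contributors with true value $v$ and $I_v$ the number of reports equal to $v$, then $\hat n_v=(I_v-nq)/(p-q)$ satisfies $\mathrm{E}[\hat n_v]=n_v$ for every $v\in[k]$ (assuming $p\ne q$). *)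

theory Defs
  imports "HOL-Probability.Probability"
begin

definition jrr_prob :: "nat \<Rightarrow> real \<Rightarrow> real \<Rightarrow> real \<Rightarrow> nat \<Rightarrow> nat \<Rightarrow> nat \<Rightarrow> nat \<Rightarrow> real" where
  "jrr_prob k p q \<rho> v1 v2 a b =
     (if a \<in> {1..k} \<and> b \<in> {1..k} then
        (if a = v1 \<and> b = v2 then p^2 + \<rho>*p*q
         else if a = v1 \<and> b \<noteq> v2 then p*q - \<rho>*p*q / (real k - 1)
         else if a \<noteq> v1 \<and> b = v2 then p*q - \<rho>*p*q / (real k - 1)
         else q^2 + \<rho>*p*q / (real k - 1)^2)
      else 0)"

end

theory Submission
  imports Defs
begin

text \<open>Summing the joint law of a group over the partner's report gives a contributor's marginal:
  the correlation terms in \<open>\<rho>\<close> cancel, leaving \<open>p\<^sup>2 + (k-1) p q = p\<close> for the true value and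
  \<open>p q + (k-1) q\<^sup>2 = q\<close> for any other one. The count \<open>I\<^sub>v\<close> is a sum of indicators, so by
  linearity of expectation \<open>E[I\<^sub>v] = n\<^sub>v p + (n - n\<^sub>v) q\<close>, and the estimator is unbiased.\<close>

lemma measure_eq_sum_joint:
  fixes X :: "'a \<Rightarrow> 'b" and Y :: "'a \<Rightarrow> 'c::countable"
  assumes "finite_measure M" "finite S"
    and "X \<in> measurable M (count_space UNIV)" "Y \<in> measurable M (count_space UNIV)"
    and "\<And>b. b \<notin> S \<Longrightarrow> measure M {\<omega> \<in> space M. X \<omega> = a \<and> Y \<omega> = b} = 0"
  shows "measure M {\<omega> \<in> space M. X \<omega> = a} = (\<Sum>b\<in>S. measure M {\<omega> \<in> space M. X \<omega> = a \<and> Y \<omega> = b})"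
proof -
  interpret finite_measure M by fact
  define A where "A b = {\<omega> \<in> space M. X \<omega> = a \<and> Y \<omega> = b}" for b
  have A_sets: "A b \<in> sets M" for b
    unfolding A_def using assms(3,4) by measurable
  have "(\<Union>b\<in>-S. A b) \<in> null_sets M"
    using assms(5) A_sets by (intro null_sets_UN') (auto simp: A_def emeasure_eq_measure null_setsI)
  moreover have "{\<omega> \<in> space M. X \<omega> = a} = (\<Union>b\<in>S. A b) \<union> (\<Union>b\<in>-S. A b)"
    unfolding A_def by auto
  ultimately have "measure M {\<omega> \<in> space M. X \<omega> = a} = measure M (\<Union>b\<in>S. A b)"
    using A_sets by (simp add: measure_Un_null_set sets.countable_UN'')
  also have "\<dots> = (\<Sum>b\<in>S. measure M (A b))"
    using A_sets \<open>finite S\<close>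
    by (intro finite_measure_finite_Union) (auto simp: disjoint_family_on_def A_def)
  finally show ?thesis unfolding A_def .
qed

lemma jrr_prob_swap: "jrr_prob k p q \<rho> v1 v2 a b = jrr_prob k p q \<rho> v2 v1 b a"
  by (auto simp: jrr_prob_def)

lemma sum_jrr_prob_snd:
  assumes "k \<ge> 2" "p + (real k - 1) * q = 1" "a \<in> {1..k}" "v2 \<in> {1..k}"
  shows "(\<Sum>b\<in>{1..k}. jrr_prob k p q \<rho> v1 v2 a b) = (if a = v1 then p else q)"
proof -
  define d where "d = real k - 1"
  have "d > 0" using assms(1) by (simp add: d_def)
  have card: "real (card ({1..k} - {v2})) = d"
    using assms(4) by (simp add: d_def of_nat_diff)
  have "(\<Sum>b\<in>{1..k}. jrr_prob k p q \<rho> v1 v2 a b)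
      = jrr_prob k p q \<rho> v1 v2 a v2 + (\<Sum>b\<in>{1..k} - {v2}. jrr_prob k p q \<rho> v1 v2 a b)"
    using assms(4) by (simp add: sum.remove)
  also have "\<dots> = (if a = v1 then p^2 + \<rho>*p*q + d * (p*q - \<rho>*p*q / d)
                   else p*q - \<rho>*p*q / d + d * (q^2 + \<rho>*p*q / d^2))"
    using assms(3,4) card by (simp add: jrr_prob_def d_def)
  also have "\<dots> = (if a = v1 then p * (p + d * q) else q * (p + d * q))"
    using \<open>d > 0\<close> by (simp add: field_simps power2_eq_square)
  finally show ?thesis using assms(2) by (simp add: d_def)
qed

lemma measure_jrr_reports:
  fixes X Y :: "'a \<Rightarrow> nat"
  assumes "finite_measure M"
    and "X \<in> measurable M (count_space UNIV)" "Y \<in> measurable M (count_space UNIV)"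
    and joint: "\<And>a b. measure M {\<omega> \<in> space M. X \<omega> = a \<and> Y \<omega> = b} = jrr_prob k p q \<rho> v1 v2 a b"
    and "k \<ge> 2" "p + (real k - 1) * q = 1" "v1 \<in> {1..k}" "v2 \<in> {1..k}" "w \<in> {1..k}"
  shows "measure M {\<omega> \<in> space M. X \<omega> = w} = (if w = v1 then p else q)"
    and "measure M {\<omega> \<in> space M. Y \<omega> = w} = (if w = v2 then p else q)"
proof -
  have "measure M {\<omega> \<in> space M. X \<omega> = w}
      = (\<Sum>b\<in>{1..k}. measure M {\<omega> \<in> space M. X \<omega> = w \<and> Y \<omega> = b})"
    by (rule measure_eq_sum_joint) (auto simp: assms(1-3) joint jrr_prob_def)
  also have "\<dots> = (\<Sum>b\<in>{1..k}. jrr_prob k p q \<rho> v1 v2 w b)"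
    by (simp add: joint)
  also have "\<dots> = (if w = v1 then p else q)"
    using assms(5-9) by (intro sum_jrr_prob_snd)
  finally show "measure M {\<omega> \<in> space M. X \<omega> = w} = (if w = v1 then p else q)" .
  have "measure M {\<omega> \<in> space M. Y \<omega> = w}
      = (\<Sum>a\<in>{1..k}. measure M {\<omega> \<in> space M. Y \<omega> = w \<and> X \<omega> = a})"
    by (rule measure_eq_sum_joint) (auto simp: assms(1-3) conj_commute joint jrr_prob_def)
  also have "\<dots> = (\<Sum>a\<in>{1..k}. jrr_prob k p q \<rho> v2 v1 w a)"
    by (simp add: conj_commute joint jrr_prob_swap[of _ _ _ _ v1])
  also have "\<dots> = (if w = v2 then p else q)"
    using assms(5-9) by (intro sum_jrr_prob_snd)
  finally show "measure M {\<omega> \<in> space M. Y \<omega> = w} = (if w = v2 then p else q)" .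
qed

lemma card_events_eq_sum_indicator:
  fixes n :: nat
  shows "real (card {i. i < n \<and> \<omega> \<in> A i}) = (\<Sum>i<n. indicator (A i) \<omega>)"
  by (simp add: indicator_def Int_def conj_commute)

lemma (in prob_space) expectation_card_events:
  fixes n :: nat
  assumes "\<And>i. i < n \<Longrightarrow> A i \<in> events"
  shows "integrable M (\<lambda>\<omega>. real (card {i. i < n \<and> \<omega> \<in> A i}))"
    and "expectation (\<lambda>\<omega>. real (card {i. i < n \<and> \<omega> \<in> A i})) = (\<Sum>i<n. prob (A i))"
  using assms by (auto simp: card_events_eq_sum_indicator emeasure_eq_measure
      intro!: Bochner_Integration.integrable_sum Bochner_Integration.integral_sum)

lemma (in prob_space) expectation_unbiased_count:
  fixes n :: nat
  assumes "\<And>i. i < n \<Longrightarrow> A i \<in> events"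
    and "\<And>i. i < n \<Longrightarrow> prob (A i) = (if P i then p else q)" and "p \<noteq> q"
  shows "expectation (\<lambda>\<omega>. (real (card {i. i < n \<and> \<omega> \<in> A i}) - real n * q) / (p - q))
       = real (card {i. i < n \<and> P i})"
proof -
  have "(\<Sum>i<n. prob (A i)) = (\<Sum>i<n. q + (p - q) * of_bool (P i))"
    using assms(2) by (intro sum.cong) auto
  also have "\<dots> = real n * q + (p - q) * real (card {i. i < n \<and> P i})"
    by (simp add: sum.distrib sum_distrib_left[symmetric] Int_def conj_commute)
  finally have "(\<Sum>i<n. prob (A i)) = \<dots>" .
  then show ?thesis
    using expectation_card_events[OF assms(1)] \<open>p \<noteq> q\<close> by (simp add: prob_space)
qed

theorem mainTheorem9:
  fixes M :: "'a measure"
    and k n :: nat and p q \<rho> :: real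
    and x :: "nat \<Rightarrow> nat"
    and G :: "(nat \<times> nat) set"
    and R :: "nat \<Rightarrow> 'a \<Rightarrow> nat"
  assumes "prob_space M"
    and "k \<ge> 2"
    and "p + (real k - 1) * q = 1"
    and "p \<ge> 0" and "q \<ge> 0"
    and "p^2 + \<rho>*p*q \<ge> 0"
    and "p*q - \<rho>*p*q / (real k - 1) \<ge> 0"
    and "q^2 + \<rho>*p*q / (real k - 1)^2 \<ge> 0"
    and "\<forall>i<n. x i \<in> {1..k}"
    and "\<forall>g\<in>G. fst g < n \<and> snd g < n \<and> fst g \<noteq> snd g"
    and "\<forall>i<n. \<exists>!g\<in>G. i = fst g \<or> i = snd g"
    and "\<forall>i<n. R i \<in> measurable M (count_space UNIV)"
    and "\<forall>g\<in>G. \<forall>a b. measure M {\<omega> \<in> space M. R (fst g) \<omega> = a \<and> R (snd g) \<omega> = b}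
                      = jrr_prob k p q \<rho> (x (fst g)) (x (snd g)) a b"
    and "prob_space.indep_vars M (\<lambda>_. count_space UNIV)
           (\<lambda>g \<omega>. (R (fst g) \<omega>, R (snd g) \<omega>)) G"
  shows "(\<forall>i<n. \<forall>w\<in>{1..k}.
            measure M {\<omega> \<in> space M. R i \<omega> = w} = (if w = x i then p else q))
         \<and> (p \<noteq> q \<longrightarrow> (\<forall>v\<in>{1..k}.
            integral\<^sup>L M (\<lambda>\<omega>. (real (card {i. i < n \<and> R i \<omega> = v}) - real n * q) / (p - q))
              = real (card {i. i < n \<and> x i = v})))"
proof -
  interpret prob_space M by fact
  have report_prob: "measure M {\<omega> \<in> space M. R i \<omega> = w} = (if w = x i then p else q)"
    if "i < n" "w \<in> {1..k}" for i w
  proof -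
    obtain g where g: "g \<in> G" "i = fst g \<or> i = snd g" using assms(11) \<open>i < n\<close> by blast
    then have "fst g < n" "snd g < n" using assms(10) by auto
    with g that assms(2,3,9,12,13) show ?thesis
      using measure_jrr_reports[OF finite_measure_axioms, of "R (fst g)" "R (snd g)"] by auto
  qed
  have "integral\<^sup>L M (\<lambda>\<omega>. (real (card {i. i < n \<and> R i \<omega> = v}) - real n * q) / (p - q))
      = real (card {i. i < n \<and> x i = v})" if "p \<noteq> q" "v \<in> {1..k}" for v
  proof -
    let ?A = "\<lambda>i. {\<omega> \<in> space M. R i \<omega> = v}"
    have "?A i \<in> events" if "i < n" for i
    proof -
      have "R i \<in> measurable M (count_space UNIV)" using assms(12) that by blast
      then show ?thesis by measurable
    qed
    then have "expectation (\<lambda>\<omega>. (real (card {i. i < n \<and> \<omega> \<in> ?A i}) - real n * q) / (p - q))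
        = real (card {i. i < n \<and> x i = v})"
      using report_prob \<open>v \<in> {1..k}\<close> \<open>p \<noteq> q\<close> by (intro expectation_unbiased_count) auto
    then show ?thesis
      by (simp cong: Bochner_Integration.integral_cong)
  qed
  with report_prob show ?thesis by blast
qed

end
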